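(* In the call-by-value $\lambda$-calculus, contextual equivalence and evaluation-contextual equivalence coincide: for all $M,N\in\Lambda^\bullet$, $M\simeq^v N$ if and only if $M\cong^v N$.
   Context: $\Lambda^\bullet$ is the set of closed $\lambda$-terms; values are closed abstractions $\lambda x.P$. Call-by-value reduction $\longrightarrow$ on closed terms is given by: $MN\longrightarrow MN'$ if $N\longrightarrow N'$; $MV\longrightarrow M'V$ if $M\longrightarrow M'$ and $V$ is a value; $(\lambda x.P)V\longrightarrow P[V/x]$ if $V$ is a value. $\Longrightarrow$ is the reflexive transitive closure; $M{\Downarrow}$ means $M\Longrightarrow V$ for some value $V$. Contexts are generated by $C::=x\mid[\cdot]\mid C\,C\mid\lambda x.C$ and $C[M]$ fills every hole with $M$ (capture allowed). $M\simeq^v N$ iff for all contexts $C$ with $C[M],C[N]$ closed, $C[M]{\Downarrow}\iff C[N]{\Downarrow}$. Call-by-value evaluation contexts are $\mathcal{E}::=[\cdot]\mid M\,\mathcal{E}\mid\mathcal{E}\,V$ with $M\in\Lambda^\bullet$ and $V$ a value; $M\cong^v N$ iff for all evaluation contexts $\mathcal{E}$, $\mathcal{E}[M]{\Downarrow}\iff\mathcal{E}[N]{\Downarrow}$. *)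

theory Defs
  imports Main
begin

datatype trm = Var nat | App trm trm | Lam nat trm

fun fv :: "trm \<Rightarrow> nat set" where
  "fv (Var x) = {x}"
| "fv (App M N) = fv M \<union> fv N"
| "fv (Lam x M) = fv M - {x}"

definition closed :: "trm \<Rightarrow> bool" where
  "closed M \<longleftrightarrow> fv M = {}"

definition is_value :: "trm \<Rightarrow> bool" where
  "is_value V \<longleftrightarrow> closed V \<and> (\<exists>x P. V = Lam x P)"

text \<open>Substitution P[V/x]; it is only ever used with closed V, so no capture can occur.\<close>
fun subst :: "trm \<Rightarrow> trm \<Rightarrow> nat \<Rightarrow> trm" where
  "subst (Var y) V x = (if y = x then V else Var y)"
| "subst (App M N) V x = App (subst M V x) (subst N V x)"
| "subst (Lam y P) V x = (if y = x then Lam y P else Lam y (subst P V x))"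

text \<open>Call-by-value (right-to-left) reduction.\<close>
inductive cbv_step :: "trm \<Rightarrow> trm \<Rightarrow> bool" where
  argR: "cbv_step N N' \<Longrightarrow> cbv_step (App M N) (App M N')"
| funL: "cbv_step M M' \<Longrightarrow> is_value V \<Longrightarrow> cbv_step (App M V) (App M' V)"
| beta: "is_value V \<Longrightarrow> cbv_step (App (Lam x P) V) (subst P V x)"

definition converges :: "trm \<Rightarrow> bool" where
  "converges M \<longleftrightarrow> (\<exists>V. cbv_step\<^sup>*\<^sup>* M V \<and> is_value V)"

text \<open>General contexts; filling allows capture.\<close>
datatype ctx = CVar nat | Hole | CApp ctx ctx | CLam nat ctx

fun fill :: "ctx \<Rightarrow> trm \<Rightarrow> trm" where
  "fill (CVar x) M = Var x"
| "fill Hole M = M"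
| "fill (CApp C D) M = App (fill C M) (fill D M)"
| "fill (CLam x C) M = Lam x (fill C M)"

definition ctx_equiv :: "trm \<Rightarrow> trm \<Rightarrow> bool" where
  "ctx_equiv M N \<longleftrightarrow>
     (\<forall>C. closed (fill C M) \<and> closed (fill C N) \<longrightarrow>
          (converges (fill C M) \<longleftrightarrow> converges (fill C N)))"

datatype ectx = EHole | EArg trm ectx | EFun ectx trm

fun wf_ectx :: "ectx \<Rightarrow> bool" where
  "wf_ectx EHole = True"
| "wf_ectx (EArg M E) = (closed M \<and> wf_ectx E)"
| "wf_ectx (EFun E V) = (wf_ectx E \<and> is_value V)"

fun efill :: "ectx \<Rightarrow> trm \<Rightarrow> trm" where
  "efill EHole M = M"
| "efill (EArg N E) M = App N (efill E M)"
| "efill (EFun E V) M = App (efill E M) V"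

definition ectx_equiv :: "trm \<Rightarrow> trm \<Rightarrow> bool" where
  "ectx_equiv M N \<longleftrightarrow>
     (\<forall>E. wf_ectx E \<longrightarrow> (converges (efill E M) \<longleftrightarrow> converges (efill E N)))"

end

theory Submission
  imports Defs
begin

(* Contextual equivalence trivially implies evaluation-contextual
   equivalence, since every evaluation context is a context.  For the converse
   assume E[M]\<Down> \<Longrightarrow> E[N]\<Down> for all evaluation contexts E ("M approximates N") and
   let C be a closed context with C[M]\<Down> in n steps.  Look at the first step of C[M]:
   either some hole of C sits in evaluation position, i.e. C = E[\<cdot>] for an evaluation
   context E built from contexts, or the step does not touch M and is mirrored by a
   step C[N] \<rightarrow> C'[N] with C'[M] the reduct.  In the second case induct on n.  In the
   first case plug M into that single hole: the context D = E[M] has fewer holes and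
   D[M] = C[M], so by induction on the number of holes D[N] = E'[M]\<Down> (E' being E
   filled with N), and approximation gives E'[N] = C[N]\<Down>. *)

fun cfv :: "ctx \<Rightarrow> nat set" where
  "cfv (CVar x) = {x}"
| "cfv Hole = {}"
| "cfv (CApp C D) = cfv C \<union> cfv D"
| "cfv (CLam x C) = cfv C - {x}"

text \<open>Number of holes of a context: the inner measure of the main induction.\<close>
fun holes :: "ctx \<Rightarrow> nat" where
  "holes (CVar x) = 0"
| "holes Hole = 1"
| "holes (CApp C D) = holes C + holes D"
| "holes (CLam x C) = holes C"

fun ctx_of :: "trm \<Rightarrow> ctx" where
  "ctx_of (Var x) = CVar x"
| "ctx_of (App M N) = CApp (ctx_of M) (ctx_of N)"
| "ctx_of (Lam x M) = CLam x (ctx_of M)"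

lemma fill_ctx_of [simp]: "fill (ctx_of T) K = T"
  by (induction T) auto

lemma cfv_ctx_of [simp]: "cfv (ctx_of T) = fv T"
  by (induction T) auto

lemma holes_ctx_of [simp]: "holes (ctx_of T) = 0"
  by (induction T) auto

lemma fv_fill: "closed K \<Longrightarrow> fv (fill C K) = cfv C"
  by (induction C) (auto simp: closed_def)

fun csubst :: "ctx \<Rightarrow> ctx \<Rightarrow> nat \<Rightarrow> ctx" where
  "csubst (CVar y) D x = (if y = x then D else CVar y)"
| "csubst Hole D x = Hole"
| "csubst (CApp C1 C2) D x = CApp (csubst C1 D x) (csubst C2 D x)"
| "csubst (CLam y C) D x = (if y = x then CLam y C else CLam y (csubst C D x))"

lemma subst_fresh: "x \<notin> fv T \<Longrightarrow> subst T V x = T"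
  by (induction T) auto

text \<open>Filling with a closed term commutes with substitution: this is what lets a
  beta step inside C[M] be replayed in C[N].\<close>
lemma fill_csubst: "closed K \<Longrightarrow> fill (csubst C D x) K = subst (fill C K) (fill D K) x"
  by (induction C) (auto simp: closed_def subst_fresh)

lemma cfv_csubst: "cfv (csubst C D x) \<subseteq> (cfv C - {x}) \<union> cfv D"
  by (induction C) auto

datatype cectx = CEHole | CEArg ctx cectx | CEFun cectx ctx

fun cefill :: "cectx \<Rightarrow> ctx \<Rightarrow> ctx" where
  "cefill CEHole X = X"
| "cefill (CEArg D E) X = CApp D (cefill E X)"
| "cefill (CEFun E D) X = CApp (cefill E X) D"

text \<open>Well-formedness: closed components, and function-position arguments are
  abstractions, so that filling with a closed term yields an evaluation context.\<close>
fun wf_cectx :: "cectx \<Rightarrow> bool" where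
  "wf_cectx CEHole = True"
| "wf_cectx (CEArg D E) = (cfv D = {} \<and> wf_cectx E)"
| "wf_cectx (CEFun E D) = (wf_cectx E \<and> cfv D = {} \<and> (\<exists>x Q. D = CLam x Q))"

fun ectx_at :: "cectx \<Rightarrow> trm \<Rightarrow> ectx" where
  "ectx_at CEHole K = EHole"
| "ectx_at (CEArg D E) K = EArg (fill D K) (ectx_at E K)"
| "ectx_at (CEFun E D) K = EFun (ectx_at E K) (fill D K)"

lemma fill_cefill: "fill (cefill E X) K = efill (ectx_at E K) (fill X K)"
  by (induction E) auto

lemma holes_cefill: "holes (cefill E X) + 1 = holes (cefill E Hole) + holes X"
  by (induction E) auto

lemma holes_cefill_pos: "1 \<le> holes (cefill E Hole)"
  by (induction E) auto

lemma cfv_cefill: "cfv (cefill E X) = cfv (cefill E Hole) \<union> cfv X"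
  by (induction E) auto

lemma wf_ectx_at: "wf_cectx E \<Longrightarrow> closed K \<Longrightarrow> wf_ectx (ectx_at E K)"
  by (induction E) (auto simp: closed_def fv_fill is_value_def)

definition eval_hole :: "ctx \<Rightarrow> bool" where
  "eval_hole C \<longleftrightarrow> (\<exists>E. C = cefill E Hole \<and> wf_cectx E)"

lemma eval_hole_Hole: "eval_hole Hole"
  unfolding eval_hole_def by (metis cefill.simps(1) wf_cectx.simps(1))

lemma eval_hole_arg: "eval_hole C2 \<Longrightarrow> cfv C1 = {} \<Longrightarrow> eval_hole (CApp C1 C2)"
  unfolding eval_hole_def by (metis cefill.simps(2) wf_cectx.simps(2))

lemma eval_hole_fun:
  "eval_hole C1 \<Longrightarrow> cfv C2 = {} \<Longrightarrow> C2 = CLam x Q \<Longrightarrow> eval_hole (CApp C1 C2)"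
  unfolding eval_hole_def by (metis cefill.simps(3) wf_cectx.simps(3))

section \<open>Classification of the first reduction step of C[M]\<close>

lemma fill_Lam: "fill C K = Lam x P \<Longrightarrow> C = Hole \<or> (\<exists>Q. C = CLam x Q \<and> P = fill Q K)"
  by (cases C) auto

lemma value_ctx:
  assumes "is_value (fill C M)" "C \<noteq> Hole" "cfv C = {}" "closed N"
  obtains x Q where "C = CLam x Q" "is_value (fill C N)"
proof -
  from assms(1) obtain x P where "fill C M = Lam x P" by (auto simp: is_value_def)
  with assms(2) obtain Q where "C = CLam x Q" using fill_Lam by blast
  moreover have "is_value (fill C N)"
    using calculation assms(3,4) by (auto simp: is_value_def closed_def fv_fill)
  ultimately show thesis using that by blast
qed

lemma first_step_cases:
  assumes M: "closed M" and N: "closed N"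
  shows "cfv C = {} \<Longrightarrow> cbv_step (fill C M) T \<Longrightarrow> eval_hole C \<or>
    (\<exists>C'. T = fill C' M \<and> cbv_step (fill C N) (fill C' N) \<and> cfv C' = {})"
proof (induction C arbitrary: T)
  case Hole
  then show ?case using eval_hole_Hole by blast
next
  case (CVar x)
  then show ?case by simp
next
  case (CLam x C)
  then show ?case by (auto elim: cbv_step.cases)
next
  case (CApp C1 C2)
  have closed1: "cfv C1 = {}" and closed2: "cfv C2 = {}" using CApp.prems(1) by auto
  show ?case
  proof (cases "C2 = Hole")
    case True
    then show ?thesis using eval_hole_arg[OF eval_hole_Hole closed1] by blast
  next
    case C2: False
    from CApp.prems(2) show ?thesis
    proof (cases rule: cbv_step.cases)
      case (argR N0 B' A0)
      then have T: "T = App (fill C1 M) B'" and step: "cbv_step (fill C2 M) B'" by auto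
      from CApp.IH(2)[OF closed2 step] show ?thesis
      proof
        assume "eval_hole C2"
        then show ?thesis using eval_hole_arg closed1 by blast
      next
        assume "\<exists>C'. B' = fill C' M \<and> cbv_step (fill C2 N) (fill C' N) \<and> cfv C' = {}"
        then obtain C' where "B' = fill C' M" "cbv_step (fill C2 N) (fill C' N)" "cfv C' = {}"
          by blast
        then show ?thesis using T closed1
          by (intro disjI2 exI[of _ "CApp C1 C'"]) (auto intro: cbv_step.argR)
      qed
    next
      case (funL A0 A' V0)
      then have T: "T = App A' (fill C2 M)" and step: "cbv_step (fill C1 M) A'"
        and vM: "is_value (fill C2 M)" by auto
      obtain y Q where Q: "C2 = CLam y Q" and vN: "is_value (fill C2 N)"
        using value_ctx[OF vM C2 closed2 N] .
      from CApp.IH(1)[OF closed1 step] show ?thesis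
      proof
        assume "eval_hole C1"
        then show ?thesis using eval_hole_fun closed2 Q by blast
      next
        assume "\<exists>C'. A' = fill C' M \<and> cbv_step (fill C1 N) (fill C' N) \<and> cfv C' = {}"
        then obtain C' where "A' = fill C' M" "cbv_step (fill C1 N) (fill C' N)" "cfv C' = {}"
          by blast
        then show ?thesis using T closed2 vN
          by (intro disjI2 exI[of _ "CApp C' C2"]) (auto intro: cbv_step.funL)
      qed
    next
      case (beta V0 x P)
      then have lam: "fill C1 M = Lam x P" and T: "T = subst P (fill C2 M) x"
        and vM: "is_value (fill C2 M)" by auto
      obtain y Q where Q: "C2 = CLam y Q" and vN: "is_value (fill C2 N)"
        using value_ctx[OF vM C2 closed2 N] .
      show ?thesis
      proof (cases "C1 = Hole")
        case True
        then show ?thesis using eval_hole_fun[OF eval_hole_Hole closed2 Q] by blast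
      next
        case False
        with lam obtain P' where P': "C1 = CLam x P'" "P = fill P' M"
          using fill_Lam by blast
        have "T = fill (csubst P' C2 x) M"
          using T P' fill_csubst[OF M] by simp
        moreover have "cbv_step (fill (CApp C1 C2) N) (fill (csubst P' C2 x) N)"
          using P' vN fill_csubst[OF N] by (auto intro: cbv_step.beta)
        moreover have "cfv (csubst P' C2 x) = {}"
          using cfv_csubst[of P' C2 x] closed1 closed2 P' by auto
        ultimately show ?thesis by blast
      qed
    qed
  qed
qed

section \<open>Evaluation-contextual approximation lifts to all contexts\<close>

definition ectx_approx :: "trm \<Rightarrow> trm \<Rightarrow> bool" where
  "ectx_approx M N \<longleftrightarrow>
     (\<forall>E. wf_ectx E \<longrightarrow> converges (efill E M) \<longrightarrow> converges (efill E N))"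

lemma converges_step: "cbv_step M M' \<Longrightarrow> converges M' \<Longrightarrow> converges M"
  by (auto simp: converges_def intro: converse_rtranclp_into_rtranclp)

lemma value_fill_converges:
  assumes "is_value (fill C M)" "cfv C = {}" "closed N" "ectx_approx M N"
  shows "converges (fill C N)"
proof (cases "C = Hole")
  case True
  have "converges (efill EHole M)" using assms(1) True by (auto simp: converges_def)
  then show ?thesis
    using assms(4) True unfolding ectx_approx_def
    by (metis efill.simps(1) fill.simps(2) wf_ectx.simps(1))
next
  case False
  obtain x Q where "is_value (fill C N)" using value_ctx[OF assms(1) False assms(2,3)] .
  then show ?thesis by (auto simp: converges_def)
qed

lemma plug_eval_hole:
  assumes "eval_hole C" "cfv C = {}" "closed M" "closed N" "ectx_approx M N"
  obtains D where "holes D < holes C" "cfv D = {}" "fill D M = fill C M"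
    "converges (fill D N) \<Longrightarrow> converges (fill C N)"
proof -
  from assms(1) obtain E where E: "C = cefill E Hole" "wf_cectx E"
    by (auto simp: eval_hole_def)
  define D where "D = cefill E (ctx_of M)"
  have "holes D < holes C"
    using E holes_cefill[of E "ctx_of M"] holes_cefill_pos[of E] by (simp add: D_def)
  moreover have "cfv D = {}"
    using E assms(2,3) cfv_cefill[of E "ctx_of M"] by (simp add: D_def closed_def)
  moreover have "fill D M = fill C M" using E by (simp add: D_def fill_cefill)
  moreover have "converges (fill C N)" if "converges (fill D N)"
  proof -
    have "converges (efill (ectx_at E N) M)" using that by (simp add: D_def fill_cefill)
    then have "converges (efill (ectx_at E N) N)"
      using assms(4,5) E(2) wf_ectx_at by (auto simp: ectx_approx_def)
    then show ?thesis using E(1) by (simp add: fill_cefill)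
  qed
  ultimately show thesis using that by blast
qed

lemma ectx_approx_fill_steps:
  assumes M: "closed M" and N: "closed N" and approx: "ectx_approx M N"
  shows "cfv C = {} \<Longrightarrow> (cbv_step ^^ n) (fill C M) V \<Longrightarrow> is_value V \<Longrightarrow>
    converges (fill C N)"
proof (induction n arbitrary: C V rule: less_induct)
  case outer: (less n)
  show ?case using outer.prems
  proof (induction "holes C" arbitrary: C V rule: less_induct)
    case (less C V)
    show ?case
    proof (cases n)
      case 0
      then have "is_value (fill C M)" using less.prems(2,3) by simp
      then show ?thesis using value_fill_converges less.prems(1) N approx by blast
    next
      case (Suc m)
      then obtain T where T: "cbv_step (fill C M) T" "(cbv_step ^^ m) T V"
        using less.prems(2) relpowp_Suc_D2 by metis
      from first_step_cases[OF M N less.prems(1) T(1)] show ?thesis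
      proof
        assume "eval_hole C"
        then obtain D where D: "holes D < holes C" "cfv D = {}" "fill D M = fill C M"
          and lift: "converges (fill D N) \<Longrightarrow> converges (fill C N)"
          using plug_eval_hole less.prems(1) M N approx by blast
        have "converges (fill D N)"
          using less.hyps[OF D(1,2)] D(3) less.prems(2,3) by simp
        then show ?thesis by (rule lift)
      next
        assume "\<exists>C'. T = fill C' M \<and> cbv_step (fill C N) (fill C' N) \<and> cfv C' = {}"
        then obtain C' where C': "T = fill C' M" "cbv_step (fill C N) (fill C' N)" "cfv C' = {}"
          by blast
        have "converges (fill C' N)"
          using outer.IH[of m C' V] Suc C'(1,3) T(2) less.prems(3) by simp
        then show ?thesis using C'(2) converges_step by blast
      qed
    qed
  qed
qed

lemma ectx_approx_fill:
  assumes "closed M" "closed N" "ectx_approx M N" "closed (fill C M)" "converges (fill C M)"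
  shows "converges (fill C N)"
proof -
  from assms(5) obtain V n where "(cbv_step ^^ n) (fill C M) V" "is_value V"
    by (auto simp: converges_def rtranclp_power)
  moreover have "cfv C = {}" using assms(1,4) by (simp add: closed_def fv_fill)
  ultimately show ?thesis using ectx_approx_fill_steps[OF assms(1-3)] by blast
qed

fun ctx_of_ectx :: "ectx \<Rightarrow> ctx" where
  "ctx_of_ectx EHole = Hole"
| "ctx_of_ectx (EArg K E) = CApp (ctx_of K) (ctx_of_ectx E)"
| "ctx_of_ectx (EFun E V) = CApp (ctx_of_ectx E) (ctx_of V)"

lemma fill_ctx_of_ectx: "fill (ctx_of_ectx E) M = efill E M"
  by (induction E) auto

lemma closed_efill: "wf_ectx E \<Longrightarrow> closed M \<Longrightarrow> closed (efill E M)"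
  by (induction E) (auto simp: closed_def is_value_def)

lemma ctx_equiv_imp_ectx_equiv:
  assumes "closed M" "closed N" "ctx_equiv M N"
  shows "ectx_equiv M N"
  unfolding ectx_equiv_def
proof (intro allI impI)
  fix E assume "wf_ectx E"
  then have "closed (fill (ctx_of_ectx E) M)" "closed (fill (ctx_of_ectx E) N)"
    using assms(1,2) closed_efill by (simp_all add: fill_ctx_of_ectx)
  then show "converges (efill E M) = converges (efill E N)"
    using assms(3) unfolding ctx_equiv_def fill_ctx_of_ectx[symmetric] by blast
qed

theorem mainTheorem12:
  assumes "closed M" and "closed N"
  shows "ctx_equiv M N \<longleftrightarrow> ectx_equiv M N"
proof
  assume "ctx_equiv M N"
  then show "ectx_equiv M N" using ctx_equiv_imp_ectx_equiv assms by blast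
next
  assume "ectx_equiv M N"
  then have "ectx_approx M N" "ectx_approx N M"
    by (auto simp: ectx_approx_def ectx_equiv_def)
  then show "ctx_equiv M N"
    unfolding ctx_equiv_def
    using ectx_approx_fill[OF assms] ectx_approx_fill[OF assms(2,1)] by blast
qed

end
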